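(* Let $C, C' \in M_n(\mathbb{C})$ be contractions. Then $\mathcal{A}(C)$ is unitarily similar to $\mathcal{A}(C')$ if and only if $C$ and $C'$ are unitarily similar.
   Context: A contraction is a matrix $C$ with operator norm $\|C\|\le 1$. For a contraction $C\in M_n(\mathbb{C})$ put $D_C := I-C^*C\ge 0$ and $d:=\operatorname{rank} D_C$. Let $B_C$ denote the $d\times n$ matrix (with respect to some orthonormal basis of $\operatorname{Im} D_C$) of the map $\mathbb{C}^n\to\operatorname{Im} D_C$ that acts on $\operatorname{Im} D_C$ as $D_C^{1/2}$ and sends $(\operatorname{Im} D_C)^\perp$ to $0$; thus $B_C^*B_C=D_C$ and $B_C$ has full row rank $d$. The associated partial isometry of $C$ is the $(d+n)\times(d+n)$ matrix $\mathcal{A}(C):=\begin{bmatrix}0&B_C\\0&C\end{bmatrix}$ (its unitary similarity class does not depend on the choice of orthonormal basis of $\operatorname{Im}D_C$). *)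

theory Defs
  imports "Jordan_Normal_Form.Schur_Decomposition"
begin

definition cvnorm :: "complex vec \<Rightarrow> real" where
  "cvnorm v = sqrt (\<Sum>i<dim_vec v. (cmod (v $ i))^2)"

definition contraction :: "nat \<Rightarrow> complex mat \<Rightarrow> bool" where
  "contraction n C \<longleftrightarrow> C \<in> carrier_mat n n \<and>
     (\<forall>v \<in> carrier_vec n. cvnorm (C *\<^sub>v v) \<le> cvnorm v)"

definition defect :: "nat \<Rightarrow> complex mat \<Rightarrow> complex mat" where
  "defect n C = 1\<^sub>m n - mat_adjoint C * C"

definition psd_mat :: "nat \<Rightarrow> complex mat \<Rightarrow> bool" where
  "psd_mat n S \<longleftrightarrow> S \<in> carrier_mat n n \<and> mat_adjoint S = S \<and>
     (\<forall>v \<in> carrier_vec n. 0 \<le> Re (conjugate v \<bullet> (S *\<^sub>v v)))"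

definition is_psd_sqrt :: "nat \<Rightarrow> complex mat \<Rightarrow> complex mat \<Rightarrow> bool" where
  "is_psd_sqrt n D S \<longleftrightarrow> psd_mat n S \<and> S * S = D"

definition mat_image :: "nat \<Rightarrow> complex mat \<Rightarrow> complex vec set" where
  "mat_image n D = {D *\<^sub>v v | v. v \<in> carrier_vec n}"

definition vspan :: "nat \<Rightarrow> complex vec list \<Rightarrow> complex vec set" where
  "vspan n es = {mat_of_cols n es *\<^sub>v c | c. c \<in> carrier_vec (length es)}"

definition onb_of_image :: "nat \<Rightarrow> complex mat \<Rightarrow> complex vec list \<Rightarrow> bool" where
  "onb_of_image n D es \<longleftrightarrow> set es \<subseteq> carrier_vec n \<and>
     mat_adjoint (mat_of_cols n es) * mat_of_cols n es = 1\<^sub>m (length es) \<and>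
     vspan n es = mat_image n D"

text \<open>\<open>B\<close> is a matrix \<open>B_C\<close>: the \<open>d\<times>n\<close> matrix, w.r.t. an orthonormal basis \<open>es\<close> of
  \<open>Im D_C\<close>, of the map acting as \<open>D_C^{1/2}\<close> on \<open>Im D_C\<close> and as 0 on its orthogonal
  complement (this map equals \<open>D_C^{1/2}\<close> on all of \<open>\<complex>^n\<close>); its \<open>(i,j)\<close> entry is the
  \<open>i\<close>-th coordinate \<open>\<langle>D^{1/2} e_j, es!i\<rangle>\<close>.\<close>
definition is_B_mat :: "nat \<Rightarrow> complex mat \<Rightarrow> complex mat \<Rightarrow> bool" where
  "is_B_mat n C B \<longleftrightarrow> (\<exists>es S. onb_of_image n (defect n C) es \<and>
      is_psd_sqrt n (defect n C) S \<and>
      B = mat_adjoint (mat_of_cols n es) * S)"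

definition assoc_pi :: "complex mat \<Rightarrow> complex mat \<Rightarrow> complex mat" where
  "assoc_pi B C = four_block_mat (0\<^sub>m (dim_row B) (dim_row B)) B (0\<^sub>m (dim_row C) (dim_row B)) C"

definition unitary_mat :: "nat \<Rightarrow> complex mat \<Rightarrow> bool" where
  "unitary_mat m U \<longleftrightarrow> U \<in> carrier_mat m m \<and> mat_adjoint U * U = 1\<^sub>m m"

definition unitarily_similar :: "complex mat \<Rightarrow> complex mat \<Rightarrow> bool" where
  "unitarily_similar A A' \<longleftrightarrow> (\<exists>m U. A \<in> carrier_mat m m \<and> A' \<in> carrier_mat m m \<and>
     unitary_mat m U \<and> A' = mat_adjoint U * A * U)"

end

(*
  If C' = U^* C U with U unitary, then B_C U and B_C' are right invertible with the same
  Gram matrix D_C' = U^* D_C U, so B_C' = W B_C U for a unitary W, and diag(W^*, U)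
  conjugates A(C) into A(C').

  Conversely, the kernel of A(C) is spanned by the first d coordinate vectors: if
  B_C y = 0 and C y = 0 then y = D_C y = B_C^* B_C y = 0.  A unitary V with
  A(C) V = V A(C') maps these d vectors, which lie in the kernel of A(C'), into the
  kernel of A(C).  So V is block upper triangular, hence block diagonal diag(V1, V4),
  and V4 conjugates C into C'.

  That B_C has full row rank and B_C^* B_C = D_C comes from E E^* S = S, where S is the
  Hermitian square root of D_C and E is an isometry onto Im D_C = Im S.
*)

theory Submission
  imports Defs
begin

lemma col_eq_mult_unit_vec:
  fixes A :: "'a :: semiring_1 mat"
  shows "A \<in> carrier_mat m n \<Longrightarrow> j < n \<Longrightarrow> col A j = A *\<^sub>v unit_vec n j"
  by (intro eq_vecI) auto

lemma mult_mat_vec_zero: "A \<in> carrier_mat m n \<Longrightarrow> A *\<^sub>v 0\<^sub>v n = (0\<^sub>v m :: 'a :: semiring_0 vec)"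
  by (intro eq_vecI) (auto simp: scalar_prod_def)

lemma zero_mat_mult_vec:
  "v \<in> carrier_vec n \<Longrightarrow> 0\<^sub>m m n *\<^sub>v v = (0\<^sub>v m :: 'a :: semiring_0 vec)"
  by (intro eq_vecI) (auto simp: scalar_prod_def)

lemma minus_mat_eq_zeroD:
  fixes A B :: "'a :: ab_group_add mat"
  assumes "A \<in> carrier_mat m n" "B \<in> carrier_mat m n" "A - B = 0\<^sub>m m n"
  shows "A = B"
proof (rule eq_matI)
  fix i j assume "i < dim_row B" "j < dim_col B"
  then have "A $$ (i, j) - B $$ (i, j) = 0"
    using assms index_minus_mat(1)[of i B j A] by simp
  then show "A $$ (i, j) = B $$ (i, j)" by simp
qed (use assms in auto)

lemma mat_factor_through_columns:
  assumes A: "A \<in> carrier_mat m k" and M: "M \<in> carrier_mat m p"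
    and cols: "\<And>j. j < p \<Longrightarrow> \<exists>c \<in> carrier_vec k. col M j = A *\<^sub>v c"
  shows "\<exists>K \<in> carrier_mat k p. M = A * K"
proof -
  define c where "c j = (SOME c. c \<in> carrier_vec k \<and> col M j = A *\<^sub>v c)" for j
  have c: "c j \<in> carrier_vec k" "col M j = A *\<^sub>v c j" if "j < p" for j
    using someI_ex[OF cols[OF that, unfolded Bex_def]] by (auto simp: c_def)
  define K where "K = mat_of_cols k (map c [0..<p])"
  have K: "K \<in> carrier_mat k p"
    using mat_of_cols_carrier(1)[of k "map c [0..<p]"] by (simp add: K_def)
  have "M = A * K"
  proof (rule mat_col_eqI)
    fix j assume "j < dim_col (A * K)"
    then have j: "j < p" using K by simp
    have "col (A * K) j = A *\<^sub>v col K j" using col_mult2[OF A K j] .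
    also have "col K j = c j" using j c(1)[OF j] by (simp add: K_def)
    finally show "col M j = col (A * K) j" using c(2)[OF j] by simp
  qed (use A M K in auto)
  with K show ?thesis by blast
qed

lemma split_block_four_block_mat:
  assumes "A \<in> carrier_mat nr1 nc1" "B \<in> carrier_mat nr1 nc2"
    "C \<in> carrier_mat nr2 nc1" "D \<in> carrier_mat nr2 nc2"
  shows "split_block (four_block_mat A B C D) nr1 nc1 = (A, B, C, D)"
  using assms unfolding split_block_def Let_def by (auto intro!: eq_matI)

lemma four_block_mat_inject:
  assumes "A \<in> carrier_mat nr1 nc1" "B \<in> carrier_mat nr1 nc2"
    "C \<in> carrier_mat nr2 nc1" "D \<in> carrier_mat nr2 nc2"
    "A' \<in> carrier_mat nr1 nc1" "B' \<in> carrier_mat nr1 nc2"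
    "C' \<in> carrier_mat nr2 nc1" "D' \<in> carrier_mat nr2 nc2"
  shows "four_block_mat A B C D = four_block_mat A' B' C' D' \<longleftrightarrow>
    A = A' \<and> B = B' \<and> C = C' \<and> D = D'"
  using split_block_four_block_mat[OF assms(1-4)] split_block_four_block_mat[OF assms(5-8)]
  by (metis prod.inject)

lemma mult_four_block_diag_left:
  fixes P U :: "'a :: semiring_0 mat"
  assumes P: "P \<in> carrier_mat d d" and U: "U \<in> carrier_mat n n"
    and A: "A \<in> carrier_mat d k" and B: "B \<in> carrier_mat d l"
    and C: "C \<in> carrier_mat n k" and D: "D \<in> carrier_mat n l"
  shows "four_block_mat P (0\<^sub>m d n) (0\<^sub>m n d) U * four_block_mat A B C D =
    four_block_mat (P * A) (P * B) (U * C) (U * D)"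
  using assms by (simp add: mult_four_block_mat[OF P zero_carrier_mat zero_carrier_mat U A B C D])

lemma mult_four_block_diag_right:
  fixes P U :: "'a :: semiring_0 mat"
  assumes P: "P \<in> carrier_mat k k" and U: "U \<in> carrier_mat l l"
    and A: "A \<in> carrier_mat d k" and B: "B \<in> carrier_mat d l"
    and C: "C \<in> carrier_mat n k" and D: "D \<in> carrier_mat n l"
  shows "four_block_mat A B C D * four_block_mat P (0\<^sub>m k l) (0\<^sub>m l k) U =
    four_block_mat (A * P) (B * U) (C * P) (D * U)"
  using assms by (simp add: mult_four_block_mat[OF A B C D P zero_carrier_mat zero_carrier_mat U])

section \<open>Conjugate transpose\<close>

lemma mat_adjoint_dim[simp]:
  "dim_row (mat_adjoint A) = dim_col A" "dim_col (mat_adjoint A) = dim_row A"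
  unfolding mat_adjoint_def by auto

lemma mat_adjoint_index[simp]:
  "i < dim_col A \<Longrightarrow> j < dim_row A \<Longrightarrow> mat_adjoint A $$ (i, j) = conjugate (A $$ (j, i))"
  unfolding mat_adjoint_def by (simp add: mat_of_rows_def)

lemma mat_adjoint_carrier[simp]: "A \<in> carrier_mat m n \<Longrightarrow> mat_adjoint A \<in> carrier_mat n m"
  unfolding carrier_mat_def by simp

lemma mat_adjoint_adjoint[simp]: "mat_adjoint (mat_adjoint A) = A"
  by (rule eq_matI) auto

text \<open>Not an axiom of \<^class>\<open>conjugatable_ring\<close>; in a field it follows from
  multiplicativity.\<close>

lemma conjugate_one[simp]: "conjugate (1 :: 'a :: conjugatable_field) = 1"
proof -
  have "conjugate (1 :: 'a) * conjugate 1 = 1 * conjugate 1"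
    by (metis conjugate_dist_mul mult_1)
  then show ?thesis by (metis conjugate_zero_iff mult_cancel_right zero_neq_one)
qed

lemma mat_adjoint_one[simp]: "mat_adjoint (1\<^sub>m n :: 'a :: conjugatable_field mat) = 1\<^sub>m n"
  by (rule eq_matI) auto

lemma mat_adjoint_zero[simp]: "mat_adjoint (0\<^sub>m m n :: 'a :: conjugatable_field mat) = 0\<^sub>m n m"
  by (rule eq_matI) auto

lemma mat_adjoint_mult:
  fixes A :: "'a :: conjugatable_field mat"
  assumes "A \<in> carrier_mat m k" "B \<in> carrier_mat k n"
  shows "mat_adjoint (A * B) = mat_adjoint B * mat_adjoint A"
  using assms
  by (intro eq_matI) (auto simp: scalar_prod_def sum_conjugate conjugate_dist_mul mult.commute intro!: sum.cong)

lemma mat_adjoint_four_block_mat: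
  assumes "A \<in> carrier_mat m1 n1" "B \<in> carrier_mat m1 n2"
    "C \<in> carrier_mat m2 n1" "D \<in> carrier_mat m2 n2"
  shows "mat_adjoint (four_block_mat A B C D) =
    four_block_mat (mat_adjoint A) (mat_adjoint C) (mat_adjoint B) (mat_adjoint D)"
  using assms by (intro eq_matI) auto

lemma mat_adjoint_four_block_diag:
  assumes "P \<in> carrier_mat d d" "U \<in> carrier_mat n n"
  shows "mat_adjoint (four_block_mat P (0\<^sub>m d n) (0\<^sub>m n d) (U :: 'a :: conjugatable_field mat)) =
    four_block_mat (mat_adjoint P) (0\<^sub>m d n) (0\<^sub>m n d) (mat_adjoint U)"
  using mat_adjoint_four_block_mat[OF assms(1) zero_carrier_mat zero_carrier_mat assms(2)] by simp

lemma mult_mat_carrier_iff: "A * B \<in> carrier_mat m n \<longleftrightarrow> dim_row A = m \<and> dim_col B = n"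
  unfolding carrier_mat_def by auto

lemma mat_adjoint_carrier_iff: "mat_adjoint A \<in> carrier_mat m n \<longleftrightarrow> A \<in> carrier_mat n m"
  unfolding carrier_mat_def by auto

text \<open>These rules turn carrier goals about products into equations between dimensions;
  given the dimensions of the factors, simp can then discharge the carrier premises of
  assoc_mult_mat.\<close>

lemmas mat_carrier_simps = mult_mat_carrier_iff mat_adjoint_carrier_iff

lemma mat_adjoint_mult_self_eq_zero:
  fixes M :: "'a :: conjugatable_ordered_field mat"
  assumes M: "M \<in> carrier_mat m n" and MM: "mat_adjoint M * M = 0\<^sub>m n n"
  shows "M = 0\<^sub>m m n"
proof (rule eq_matI)
  fix i j assume i: "i < dim_row (0\<^sub>m m n :: 'a mat)" and j: "j < dim_col (0\<^sub>m m n :: 'a mat)"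
  have "(\<Sum>k\<in>{0..<m}. M $$ (k, j) * conjugate (M $$ (k, j))) = (mat_adjoint M * M) $$ (j, j)"
    using M j by (auto simp: scalar_prod_def mult.commute intro!: sum.cong)
  also have "\<dots> = 0" using MM j by simp
  finally have "\<forall>k\<in>{0..<m}. M $$ (k, j) * conjugate (M $$ (k, j)) = 0"
    by (subst (asm) sum_nonneg_eq_0_iff) (auto simp: conjugate_square_positive)
  then show "M $$ (i, j) = 0\<^sub>m m n $$ (i, j)" using i j by auto
qed (use M in auto)

lemma mult_hermitian_square_eq_zero:
  fixes S Q :: "'a :: conjugatable_ordered_field mat"
  assumes S: "S \<in> carrier_mat n n" "mat_adjoint S = S" and Q: "Q \<in> carrier_mat k n"
    and QSS: "Q * (S * S) = 0\<^sub>m k n"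
  shows "Q * S = 0\<^sub>m k n"
proof -
  have adj: "mat_adjoint (S * mat_adjoint Q) = Q * S"
    using mat_adjoint_mult[OF S(1) mat_adjoint_carrier[OF Q]] S(2) by simp
  have "mat_adjoint (S * mat_adjoint Q) * (S * mat_adjoint Q) = Q * (S * S) * mat_adjoint Q"
    unfolding adj using S Q carrier_matD[OF S(1)] carrier_matD[OF Q] by (simp add: mat_carrier_simps)
  also have "\<dots> = 0\<^sub>m k k" using QSS Q by simp
  finally have "S * mat_adjoint Q = 0\<^sub>m n k"
    by (rule mat_adjoint_mult_self_eq_zero[OF mult_carrier_mat[OF S(1) mat_adjoint_carrier[OF Q]]])
  then show ?thesis using adj by (metis mat_adjoint_zero)
qed

lemma equal_gram_kernel:
  fixes X Y :: "'a :: conjugatable_ordered_field mat"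
  assumes X: "X \<in> carrier_mat d n" and Y: "Y \<in> carrier_mat d' n"
    and XY: "mat_adjoint X * X = mat_adjoint Y * Y"
    and P: "P \<in> carrier_mat n k" and XP: "X * P = 0\<^sub>m d k"
  shows "Y * P = 0\<^sub>m d' k"
proof -
  note dims = carrier_matD[OF X] carrier_matD[OF Y] carrier_matD[OF P]
  have "mat_adjoint (Y * P) * (Y * P) = mat_adjoint P * ((mat_adjoint Y * Y) * P)"
    using X Y P by (simp add: mat_adjoint_mult[OF Y P] mat_carrier_simps dims)
  also have "\<dots> = mat_adjoint P * ((mat_adjoint X * X) * P)" by (simp only: XY)
  also have "\<dots> = mat_adjoint (X * P) * (X * P)"
    using X Y P by (simp add: mat_adjoint_mult[OF X P] mat_carrier_simps dims)
  also have "\<dots> = 0\<^sub>m k k" using XP by simp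
  finally show ?thesis by (rule mat_adjoint_mult_self_eq_zero[OF mult_carrier_mat[OF Y P]])
qed

lemma isometric_compression_of_square_root:
  fixes S E :: "'a :: conjugatable_ordered_field mat"
  assumes S: "S \<in> carrier_mat n n" "mat_adjoint S = S"
    and E: "E \<in> carrier_mat n d" "mat_adjoint E * E = 1\<^sub>m d"
    and K: "K \<in> carrier_mat d n" "S * S = E * K"
    and L: "L \<in> carrier_mat n d" "E = S * S * L"
  shows "mat_adjoint (mat_adjoint E * S) * (mat_adjoint E * S) = S * S"
    and "(mat_adjoint E * S) * (S * L) = 1\<^sub>m d"
proof -
  note dims = carrier_matD[OF S(1)] carrier_matD[OF E(1)] carrier_matD[OF K(1)] carrier_matD[OF L(1)]
  have "mat_adjoint E * (E * K) = K"
    using assoc_mult_mat[OF mat_adjoint_carrier[OF E(1)] E(1) K(1)] E K by simp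
  then have "E * mat_adjoint E * (S * S) = S * S"
    using E K by (simp add: mat_carrier_simps dims)
  moreover have P: "E * mat_adjoint E \<in> carrier_mat n n" using E by simp
  moreover have SS: "S * S \<in> carrier_mat n n" using S by simp
  ultimately have "(1\<^sub>m n - E * mat_adjoint E) * (S * S) = 0\<^sub>m n n"
    by (simp add: minus_mult_distrib_mat[OF one_carrier_mat P SS] left_mult_one_mat[OF SS])
  then have "(1\<^sub>m n - E * mat_adjoint E) * S = 0\<^sub>m n n"
    by (rule mult_hermitian_square_eq_zero[OF S minus_carrier_mat[OF P]])
  then have "S - E * mat_adjoint E * S = 0\<^sub>m n n"
    using S by (simp add: minus_mult_distrib_mat[OF one_carrier_mat P S(1)])
  then have ES: "E * mat_adjoint E * S = S"
    using minus_mat_eq_zeroD[OF S(1) mult_carrier_mat[OF P S(1)]] by simp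
  have "mat_adjoint (mat_adjoint E * S) * (mat_adjoint E * S) = S * (E * mat_adjoint E * S)"
    using E S by (simp add: mat_adjoint_mult[of _ d n _ n] mat_carrier_simps dims)
  then show "mat_adjoint (mat_adjoint E * S) * (mat_adjoint E * S) = S * S"
    using ES E S by (simp add: mat_carrier_simps dims)
  have "(mat_adjoint E * S) * (S * L) = mat_adjoint E * (S * S * L)"
    using E S L by (simp add: mat_carrier_simps dims)
  then show "(mat_adjoint E * S) * (S * L) = 1\<^sub>m d"
    using E L by simp
qed

section \<open>Unitary matrices\<close>

lemma unitary_mat_mult_adjoint: "unitary_mat n U \<Longrightarrow> U * mat_adjoint U = 1\<^sub>m n"
  unfolding unitary_mat_def by (metis mat_mult_left_right_inverse mat_adjoint_carrier)

lemma unitary_mat_adjoint: "unitary_mat n U \<Longrightarrow> unitary_mat n (mat_adjoint U)"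
  using unitary_mat_mult_adjoint unfolding unitary_mat_def by auto

lemma isometry_coisometry_square:
  fixes W :: "complex mat"
  assumes W: "W \<in> carrier_mat a b"
    and "mat_adjoint W * W = 1\<^sub>m b" and "W * mat_adjoint W = 1\<^sub>m a"
  shows "a = b"
proof -
  have "(\<Sum>i<b. (mat_adjoint W * W) $$ (i, i)) = (\<Sum>i<b. \<Sum>k<a. cnj (W $$ (k, i)) * W $$ (k, i))"
    using W by (intro sum.cong) (auto simp: scalar_prod_def lessThan_atLeast0)
  also have "\<dots> = (\<Sum>k<a. \<Sum>i<b. W $$ (k, i) * cnj (W $$ (k, i)))"
    by (subst sum.swap) (simp add: mult.commute)
  also have "\<dots> = (\<Sum>k<a. (W * mat_adjoint W) $$ (k, k))"
    using W by (intro sum.cong) (auto simp: scalar_prod_def lessThan_atLeast0)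
  finally have "of_nat b = (of_nat a :: complex)" using assms(2,3) by simp
  then show ?thesis by simp
qed

lemma isometry_right_invertible_unitary:
  fixes W :: "complex mat"
  assumes W: "W \<in> carrier_mat d' d" and WW: "mat_adjoint W * W = 1\<^sub>m d"
    and Z: "Z \<in> carrier_mat d d'" and WZ: "W * Z = 1\<^sub>m d'"
  shows "d' = d" and "unitary_mat d W"
proof -
  have "mat_adjoint W = mat_adjoint W * (W * Z)" using W by (simp add: WZ)
  also have "\<dots> = Z"
    using assoc_mult_mat[OF mat_adjoint_carrier[OF W] W Z, symmetric] WW left_mult_one_mat[OF Z] by simp
  finally have "W * mat_adjoint W = 1\<^sub>m d'" using WZ by simp
  with W WW show "d' = d" by (rule isometry_coisometry_square)
  then show "unitary_mat d W" using W WW unfolding unitary_mat_def by simp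
qed

lemma unitary_factor_of_equal_gram:
  fixes X Y :: "complex mat"
  assumes X: "X \<in> carrier_mat d n" and Y: "Y \<in> carrier_mat d' n"
    and XY: "mat_adjoint X * X = mat_adjoint Y * Y"
    and R: "R \<in> carrier_mat n d" "X * R = 1\<^sub>m d"
    and R': "R' \<in> carrier_mat n d'" "Y * R' = 1\<^sub>m d'"
  obtains W where "d' = d" "unitary_mat d W" "Y = W * X"
proof -
  note dims = carrier_matD[OF X] carrier_matD[OF Y] carrier_matD[OF R(1)]
  have RX: "R * X \<in> carrier_mat n n" using R(1) X by (rule mult_carrier_mat)
  have "X * (R * X) = X"
    using assoc_mult_mat[OF X R(1) X, symmetric] R(2) X by simp
  then have "X * (R * X - 1\<^sub>m n) = 0\<^sub>m d n"
    using X by (simp add: mult_minus_distrib_mat[OF X RX one_carrier_mat])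
  then have "Y * (R * X - 1\<^sub>m n) = 0\<^sub>m d' n"
    by (rule equal_gram_kernel[OF X Y XY minus_carrier_mat[OF one_carrier_mat]])
  then have "Y * (R * X) - Y = 0\<^sub>m d' n"
    using Y RX by (simp add: mult_minus_distrib_mat[OF Y RX one_carrier_mat])
  then have "Y * (R * X) = Y" by (rule minus_mat_eq_zeroD[OF mult_carrier_mat[OF Y RX] Y])
  then have WX: "Y * R * X = Y" using Y R(1) X by simp
  have W: "Y * R \<in> carrier_mat d' d" using Y R(1) by (rule mult_carrier_mat)
  have "mat_adjoint (Y * R) * (Y * R) = mat_adjoint R * ((mat_adjoint Y * Y) * R)"
    using Y R(1) by (simp add: mat_adjoint_mult[OF Y R(1)] mat_carrier_simps dims)
  also have "\<dots> = mat_adjoint (X * R) * (X * R)"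
    unfolding XY[symmetric] using X R(1)
    by (simp add: mat_adjoint_mult[OF X R(1)] mat_carrier_simps dims)
  also have "\<dots> = 1\<^sub>m d" unfolding R(2) by simp
  finally have WW: "mat_adjoint (Y * R) * (Y * R) = 1\<^sub>m d" .
  have "Y * R * (X * R') = 1\<^sub>m d'"
    using assoc_mult_mat[OF W X R'(1), symmetric] WX R'(2) by simp
  note unitary = isometry_right_invertible_unitary[OF W WW mult_carrier_mat[OF X R'(1)] this]
  from unitary WX show thesis by (intro that[of "Y * R"]) auto
qed

lemma unitary_four_block_diag:
  assumes P: "unitary_mat d P" and U: "unitary_mat n U"
  shows "unitary_mat (d + n) (four_block_mat P (0\<^sub>m d n) (0\<^sub>m n d) U)"
proof -
  have Pc: "P \<in> carrier_mat d d" and Uc: "U \<in> carrier_mat n n"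
    using P U unfolding unitary_mat_def by auto
  have "mat_adjoint (four_block_mat P (0\<^sub>m d n) (0\<^sub>m n d) U) * four_block_mat P (0\<^sub>m d n) (0\<^sub>m n d) U
    = four_block_mat (mat_adjoint P * P) (0\<^sub>m d n) (0\<^sub>m n d) (mat_adjoint U * U)"
    using Pc Uc by (simp add: mat_adjoint_four_block_diag
        mult_four_block_diag_left[OF mat_adjoint_carrier[OF Pc] mat_adjoint_carrier[OF Uc] Pc _ _ Uc])
  then show ?thesis using P U Pc Uc unfolding unitary_mat_def by simp
qed

lemma unitary_block_upper_triangular:
  assumes V1: "V1 \<in> carrier_mat d d" and V2: "V2 \<in> carrier_mat d n" and V4: "V4 \<in> carrier_mat n n"
    and V: "unitary_mat (d + n) (four_block_mat V1 V2 (0\<^sub>m n d) V4)"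
  shows "V2 = 0\<^sub>m d n" and "unitary_mat n V4"
proof -
  have V1': "mat_adjoint V1 \<in> carrier_mat d d" and V2': "mat_adjoint V2 \<in> carrier_mat n d"
    and V4': "mat_adjoint V4 \<in> carrier_mat n n" using V1 V2 V4 by auto
  have "four_block_mat (1\<^sub>m d) (0\<^sub>m d n) (0\<^sub>m n d) (1\<^sub>m n)
    = mat_adjoint (four_block_mat V1 V2 (0\<^sub>m n d) V4) * four_block_mat V1 V2 (0\<^sub>m n d) V4"
    using V unfolding unitary_mat_def by simp
  also have "\<dots> = four_block_mat (mat_adjoint V1 * V1) (mat_adjoint V1 * V2)
      (mat_adjoint V2 * V1) (mat_adjoint V2 * V2 + mat_adjoint V4 * V4)"
    using V1 V2 V4 V1' V2' V4' carrier_matD[OF V1] carrier_matD[OF V2] carrier_matD[OF V4]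
    by (simp add: mat_carrier_simps mat_adjoint_four_block_mat[OF V1 V2 zero_carrier_mat V4]
        mult_four_block_mat[OF V1' zero_carrier_mat V2' V4' V1 V2 zero_carrier_mat V4])
  finally have "1\<^sub>m d = mat_adjoint V1 * V1" "0\<^sub>m d n = mat_adjoint V1 * V2"
    "1\<^sub>m n = mat_adjoint V2 * V2 + mat_adjoint V4 * V4"
    by (subst (asm) four_block_mat_inject;
        use V1 V2 V4 V1' V2' V4' in \<open>auto intro: mult_carrier_mat add_carrier_mat\<close>)+
  then have V11: "mat_adjoint V1 * V1 = 1\<^sub>m d" and V12: "mat_adjoint V1 * V2 = 0\<^sub>m d n"
    and V22: "mat_adjoint V2 * V2 + mat_adjoint V4 * V4 = 1\<^sub>m n" by simp_all
  have "V1 * mat_adjoint V1 = 1\<^sub>m d" by (rule mat_mult_left_right_inverse[OF V1' V1 V11])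
  then have "V2 = V1 * (mat_adjoint V1 * V2)"
    using assoc_mult_mat[OF V1 V1' V2, symmetric] V2 by simp
  then show V2z: "V2 = 0\<^sub>m d n" unfolding V12 using V1 by simp
  have "mat_adjoint V4 * V4 = 1\<^sub>m n"
    using V22 mult_carrier_mat[OF V4' V4] unfolding V2z by simp
  then show "unitary_mat n V4" using V4 unfolding unitary_mat_def by simp
qed

section \<open>Defect and associated partial isometry\<close>

lemma defect_carrier: "C \<in> carrier_mat n n \<Longrightarrow> defect n C \<in> carrier_mat n n"
  unfolding defect_def by (intro minus_carrier_mat mult_carrier_mat[of _ n n] mat_adjoint_carrier)

lemma defect_unitary_congruence:
  assumes C: "C \<in> carrier_mat n n" and U: "unitary_mat n U"
  shows "defect n (mat_adjoint U * C * U) = mat_adjoint U * defect n C * U"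
proof -
  have Uc: "U \<in> carrier_mat n n" and UU: "mat_adjoint U * U = 1\<^sub>m n"
    using U unfolding unitary_mat_def by auto
  note dims = carrier_matD[OF C] carrier_matD[OF Uc]
  have cancel: "U * (mat_adjoint U * (C * U)) = C * U"
    using unitary_mat_mult_adjoint[OF U] C Uc by (simp add: mat_carrier_simps dims flip: assoc_mult_mat)
  have "mat_adjoint (mat_adjoint U * C * U) * (mat_adjoint U * C * U) = mat_adjoint U * (mat_adjoint C * C) * U"
    using C Uc cancel
    by (simp add: mat_adjoint_mult[of _ n n _ n] mat_carrier_simps dims)
  moreover have "mat_adjoint U * defect n C * U = 1\<^sub>m n - mat_adjoint U * (mat_adjoint C * C) * U"
  proof -
    have CC: "mat_adjoint C * C \<in> carrier_mat n n" using C by (simp add: mat_carrier_simps dims)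
    have U': "mat_adjoint U \<in> carrier_mat n n" using Uc by simp
    have "mat_adjoint U * defect n C = mat_adjoint U - mat_adjoint U * (mat_adjoint C * C)"
      unfolding defect_def
      by (simp add: mult_minus_distrib_mat[OF U' one_carrier_mat CC] right_mult_one_mat[OF U'])
    then show ?thesis
      using UU by (simp add: minus_mult_distrib_mat[OF U' mult_carrier_mat[OF U' CC] Uc])
  qed
  ultimately show ?thesis unfolding defect_def by simp
qed

lemma onb_of_image_factorizations:
  assumes D: "D \<in> carrier_mat n n" and onb: "onb_of_image n D es"
  shows "\<exists>K \<in> carrier_mat (length es) n. D = mat_of_cols n es * K"
    and "\<exists>L \<in> carrier_mat n (length es). mat_of_cols n es = D * L"
proof -
  define E where "E = mat_of_cols n es"
  have E: "E \<in> carrier_mat n (length es)" by (simp add: E_def)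
  have range: "{E *\<^sub>v c | c. c \<in> carrier_vec (length es)} = {D *\<^sub>v v | v. v \<in> carrier_vec n}"
    using onb unfolding onb_of_image_def vspan_def mat_image_def E_def by simp
  show "\<exists>K \<in> carrier_mat (length es) n. D = mat_of_cols n es * K"
    unfolding E_def[symmetric]
  proof (rule mat_factor_through_columns[OF E D])
    fix j assume "j < n"
    then have "col D j \<in> {D *\<^sub>v v | v. v \<in> carrier_vec n}"
      using D by (auto simp: col_eq_mult_unit_vec)
    then show "\<exists>c \<in> carrier_vec (length es). col D j = E *\<^sub>v c" unfolding range[symmetric] by auto
  qed
  show "\<exists>L \<in> carrier_mat n (length es). mat_of_cols n es = D * L"
    unfolding E_def[symmetric]
  proof (rule mat_factor_through_columns[OF D E])
    fix j assume "j < length es"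
    then have "col E j \<in> {E *\<^sub>v c | c. c \<in> carrier_vec (length es)}"
      using E by (auto simp: col_eq_mult_unit_vec)
    then show "\<exists>v \<in> carrier_vec n. col E j = D *\<^sub>v v" unfolding range by auto
  qed
qed

lemma is_B_matE:
  assumes C: "C \<in> carrier_mat n n" and B: "is_B_mat n C B"
  obtains d R where "B \<in> carrier_mat d n" "R \<in> carrier_mat n d"
    "mat_adjoint B * B = defect n C" "B * R = 1\<^sub>m d"
proof -
  obtain es S where onb: "onb_of_image n (defect n C) es" and sqrt: "is_psd_sqrt n (defect n C) S"
    and B_eq: "B = mat_adjoint (mat_of_cols n es) * S"
    using B unfolding is_B_mat_def by blast
  define E where "E = mat_of_cols n es"
  define d where "d = length es"
  have S: "S \<in> carrier_mat n n" "mat_adjoint S = S" "S * S = defect n C"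
    using sqrt unfolding is_psd_sqrt_def psd_mat_def by auto
  have E: "E \<in> carrier_mat n d" "mat_adjoint E * E = 1\<^sub>m d"
    using onb unfolding onb_of_image_def E_def d_def by auto
  note factors = onb_of_image_factorizations[OF defect_carrier[OF C] onb, folded E_def d_def]
  obtain K where K: "K \<in> carrier_mat d n" "S * S = E * K" using factors(1) S(3) by auto
  obtain L where L: "L \<in> carrier_mat n d" "E = S * S * L" using factors(2) S(3) by auto
  note compression = isometric_compression_of_square_root[OF S(1,2) E K L]
  show thesis
  proof
    show "B \<in> carrier_mat d n"
      unfolding B_eq E_def[symmetric] using mat_adjoint_carrier[OF E(1)] S(1) by (rule mult_carrier_mat)
    show "S * L \<in> carrier_mat n d" using S(1) L(1) by (rule mult_carrier_mat)
    show "mat_adjoint B * B = defect n C"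
      using compression(1) S(3) unfolding B_eq E_def[symmetric] by simp
    show "B * (S * L) = 1\<^sub>m d" using compression(2) unfolding B_eq E_def[symmetric] .
  qed
qed

lemma defect_gram_common_kernel_zero:
  assumes B: "B \<in> carrier_mat d n" and C: "C \<in> carrier_mat n n"
    and BB: "mat_adjoint B * B = defect n C" and y: "y \<in> carrier_vec n"
    and By: "B *\<^sub>v y = 0\<^sub>v d" and Cy: "C *\<^sub>v y = 0\<^sub>v n"
  shows "y = 0\<^sub>v n"
proof -
  have "defect n C *\<^sub>v y = y - mat_adjoint C *\<^sub>v (C *\<^sub>v y)"
    unfolding defect_def using C y
    by (simp add: minus_mult_distrib_mat_vec[OF one_carrier_mat mult_carrier_mat[OF mat_adjoint_carrier[OF C] C] y]
        assoc_mult_mat_vec[OF mat_adjoint_carrier[OF C] C y])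
  then have "y = defect n C *\<^sub>v y" using y Cy by (simp add: mult_mat_vec_zero[OF mat_adjoint_carrier[OF C]])
  also have "\<dots> = mat_adjoint B *\<^sub>v (B *\<^sub>v y)"
    unfolding BB[symmetric] by (rule assoc_mult_mat_vec[OF mat_adjoint_carrier[OF B] B y])
  also have "\<dots> = 0\<^sub>v n" using By by (simp add: mult_mat_vec_zero[OF mat_adjoint_carrier[OF B]])
  finally show ?thesis .
qed

lemma assoc_pi_eq:
  "B \<in> carrier_mat d n \<Longrightarrow> C \<in> carrier_mat n n \<Longrightarrow>
    assoc_pi B C = four_block_mat (0\<^sub>m d d) B (0\<^sub>m n d) C"
  unfolding assoc_pi_def by auto

lemma assoc_pi_carrier:
  "B \<in> carrier_mat d n \<Longrightarrow> C \<in> carrier_mat n n \<Longrightarrow> assoc_pi B C \<in> carrier_mat (d + n) (d + n)"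
  by (simp add: assoc_pi_eq)

lemma assoc_pi_mult_vec:
  assumes "B \<in> carrier_mat d n" "C \<in> carrier_mat n n" "a \<in> carrier_vec d" "y \<in> carrier_vec n"
  shows "assoc_pi B C *\<^sub>v (a @\<^sub>v y) = (B *\<^sub>v y) @\<^sub>v (C *\<^sub>v y)"
  using four_block_mat_mult_vec[OF zero_carrier_mat assms(1) zero_carrier_mat assms(2-4)]
    mult_mat_vec_carrier[OF assms(1,4)] mult_mat_vec_carrier[OF assms(2,4)]
  by (simp add: assoc_pi_eq[OF assms(1,2)] zero_mat_mult_vec[OF assms(3)])

lemma assoc_pi_block_diag_congruence:
  assumes P: "P \<in> carrier_mat d d" and U: "U \<in> carrier_mat n n"
    and B: "B \<in> carrier_mat d n" and C: "C \<in> carrier_mat n n"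
  shows "mat_adjoint (four_block_mat P (0\<^sub>m d n) (0\<^sub>m n d) U) * assoc_pi B C
      * four_block_mat P (0\<^sub>m d n) (0\<^sub>m n d) U
    = assoc_pi (mat_adjoint P * B * U) (mat_adjoint U * C * U)"
proof -
  have P': "mat_adjoint P \<in> carrier_mat d d" and U': "mat_adjoint U \<in> carrier_mat n n"
    using P U by auto
  have PB: "mat_adjoint P * B \<in> carrier_mat d n" and UC: "mat_adjoint U * C \<in> carrier_mat n n"
    using P' B U' C by (auto intro: mult_carrier_mat)
  have "mat_adjoint (four_block_mat P (0\<^sub>m d n) (0\<^sub>m n d) U) * assoc_pi B C
    = four_block_mat (0\<^sub>m d d) (mat_adjoint P * B) (0\<^sub>m n d) (mat_adjoint U * C)"
    using P U B C P' U'
    by (simp add: assoc_pi_eq mat_adjoint_four_block_diag mult_four_block_diag_left[OF P' U' zero_carrier_mat B zero_carrier_mat C])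
  then show ?thesis
    using P U PB UC
    by (simp add: assoc_pi_eq[OF mult_carrier_mat[OF PB U] mult_carrier_mat[OF UC U]]
        mult_four_block_diag_right[OF P U zero_carrier_mat PB zero_carrier_mat UC])
qed

lemma assoc_pi_intertwiner_lower_left_zero:
  assumes B: "B \<in> carrier_mat d n" and C: "C \<in> carrier_mat n n"
    and B': "B' \<in> carrier_mat d n" and C': "C' \<in> carrier_mat n n"
    and BB: "mat_adjoint B * B = defect n C"
    and V: "V \<in> carrier_mat (d + n) (d + n)"
    and AV: "assoc_pi B C * V = V * assoc_pi B' C'"
    and i: "i < n" and j: "j < d"
  shows "V $$ (d + i, j) = 0"
proof -
  define a where "a = vec_first (col V j) d"
  define y where "y = vec_last (col V j) n"
  have a: "a \<in> carrier_vec d" and y: "y \<in> carrier_vec n" by (auto simp: a_def y_def)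
  have "col V j \<in> carrier_vec (d + n)" using V by (simp add: carrier_vecI)
  then have v: "col V j = a @\<^sub>v y" unfolding a_def y_def by simp
  have "col (assoc_pi B' C') j = 0\<^sub>v (d + n)"
    using B' C' j by (intro eq_vecI) (auto simp: assoc_pi_eq)
  then have "col (V * assoc_pi B' C') j = 0\<^sub>v (d + n)"
    using col_mult2[OF V assoc_pi_carrier[OF B' C']] j by (simp add: mult_mat_vec_zero[OF V])
  then have "col (assoc_pi B C * V) j = 0\<^sub>v (d + n)" unfolding AV .
  then have "assoc_pi B C *\<^sub>v (a @\<^sub>v y) = 0\<^sub>v (d + n)"
    using col_mult2[OF assoc_pi_carrier[OF B C] V] j by (simp add: v)
  also have "0\<^sub>v (d + n) = 0\<^sub>v d @\<^sub>v 0\<^sub>v n" by (intro eq_vecI) auto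
  finally have "(B *\<^sub>v y) @\<^sub>v (C *\<^sub>v y) = 0\<^sub>v d @\<^sub>v 0\<^sub>v n"
    unfolding assoc_pi_mult_vec[OF B C a y] .
  then have "B *\<^sub>v y = 0\<^sub>v d" "C *\<^sub>v y = 0\<^sub>v n"
    using append_vec_eq[OF mult_mat_vec_carrier[OF B y] zero_carrier_vec] by auto
  then have "y = 0\<^sub>v n" by (rule defect_gram_common_kernel_zero[OF B C BB y])
  then have "y $ i = 0" using i by simp
  then show ?thesis using V i j unfolding y_def vec_last_def by simp
qed

lemma assoc_pi_intertwiner_block_diag:
  assumes B: "B \<in> carrier_mat d n" and C: "C \<in> carrier_mat n n"
    and B': "B' \<in> carrier_mat d n" and C': "C' \<in> carrier_mat n n"
    and BB: "mat_adjoint B * B = defect n C"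
    and V: "unitary_mat (d + n) V" and AV: "assoc_pi B C * V = V * assoc_pi B' C'"
  obtains V1 V4 where "V1 \<in> carrier_mat d d" "unitary_mat n V4"
    "V = four_block_mat V1 (0\<^sub>m d n) (0\<^sub>m n d) V4"
proof -
  have Vc: "V \<in> carrier_mat (d + n) (d + n)" using V unfolding unitary_mat_def by simp
  obtain V1 V2 V3 V4 where blocks: "split_block V d d = (V1, V2, V3, V4)" by (metis prod_cases4)
  note V_blocks = split_block[OF blocks carrier_matD[OF Vc]]
  have "V3 = 0\<^sub>m n d"
  proof (rule eq_matI)
    fix i j assume ij: "i < dim_row (0\<^sub>m n d :: complex mat)" "j < dim_col (0\<^sub>m n d :: complex mat)"
    have "V3 $$ (i, j) = V $$ (d + i, j)" using V_blocks ij by (subst V_blocks(5)) auto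
    also have "\<dots> = 0"
      using assoc_pi_intertwiner_lower_left_zero[OF B C B' C' BB Vc AV] ij by simp
    finally show "V3 $$ (i, j) = 0\<^sub>m n d $$ (i, j)" using ij by simp
  qed (use V_blocks in auto)
  then have V_eq: "V = four_block_mat V1 V2 (0\<^sub>m n d) V4" using V_blocks(5) by simp
  have "V2 = 0\<^sub>m d n" and "unitary_mat n V4"
    using unitary_block_upper_triangular[OF V_blocks(1,2,4)] V V_eq by auto
  with V_blocks(1) V_eq show thesis by (intro that) auto
qed

lemma unitarily_similar_assoc_piI:
  assumes B: "B \<in> carrier_mat d n" "R \<in> carrier_mat n d" "B * R = 1\<^sub>m d"
    and B': "B' \<in> carrier_mat d' n" "R' \<in> carrier_mat n d'" "B' * R' = 1\<^sub>m d'"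
    and C: "C \<in> carrier_mat n n" and C': "C' \<in> carrier_mat n n"
    and BB: "mat_adjoint B * B = defect n C" and BB': "mat_adjoint B' * B' = defect n C'"
    and sim: "unitarily_similar C C'"
  shows "unitarily_similar (assoc_pi B C) (assoc_pi B' C')"
proof -
  obtain m U where "C \<in> carrier_mat m m" and U: "unitary_mat m U"
    and C'_eq: "C' = mat_adjoint U * C * U"
    using sim unfolding unitarily_similar_def by blast
  with C have U: "unitary_mat n U" by auto
  then have Uc: "U \<in> carrier_mat n n" unfolding unitary_mat_def by simp
  note dims = carrier_matD[OF B(1)] carrier_matD[OF Uc]
  have X: "B * U \<in> carrier_mat d n" using B(1) Uc by (rule mult_carrier_mat)
  have "mat_adjoint (B * U) * (B * U) = mat_adjoint U * (mat_adjoint B * B) * U"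
    using B(1) Uc by (simp add: mat_adjoint_mult[OF B(1) Uc] mat_carrier_simps dims)
  also have "\<dots> = mat_adjoint B' * B'"
    unfolding BB BB' C'_eq by (rule defect_unitary_congruence[OF C U, symmetric])
  finally have XX: "mat_adjoint (B * U) * (B * U) = mat_adjoint B' * B'" .
  have "U * (mat_adjoint U * R) = R"
    using assoc_mult_mat[OF Uc mat_adjoint_carrier[OF Uc] B(2), symmetric] unitary_mat_mult_adjoint[OF U] B(2)
    by simp
  then have XR: "B * U * (mat_adjoint U * R) = 1\<^sub>m d"
    using B Uc by (simp add: mat_carrier_simps dims)
  obtain W where "d' = d" and W: "unitary_mat d W" and B'_eq: "B' = W * (B * U)"
    using unitary_factor_of_equal_gram[OF X B'(1) XX mult_carrier_mat[OF mat_adjoint_carrier[OF Uc] B(2)] XR B'(2,3)] .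
  have Wc: "W \<in> carrier_mat d d" using W unfolding unitary_mat_def by simp
  define V where "V = four_block_mat (mat_adjoint W) (0\<^sub>m d n) (0\<^sub>m n d) U"
  have V: "unitary_mat (d + n) V"
    unfolding V_def by (rule unitary_four_block_diag[OF unitary_mat_adjoint[OF W] U])
  have "mat_adjoint V * assoc_pi B C * V = assoc_pi (W * B * U) (mat_adjoint U * C * U)"
    unfolding V_def using assoc_pi_block_diag_congruence[OF mat_adjoint_carrier[OF Wc] Uc B(1) C] by simp
  also have "\<dots> = assoc_pi B' C'" using B'_eq C'_eq Wc B(1) Uc by simp
  finally show ?thesis
    unfolding unitarily_similar_def using V assoc_pi_carrier[OF B(1) C] assoc_pi_carrier[OF B'(1) C'] \<open>d' = d\<close>
    by metis
qed

lemma unitarily_similar_assoc_piD: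
  assumes B: "B \<in> carrier_mat d n" and B': "B' \<in> carrier_mat d' n"
    and C: "C \<in> carrier_mat n n" and C': "C' \<in> carrier_mat n n"
    and BB: "mat_adjoint B * B = defect n C"
    and sim: "unitarily_similar (assoc_pi B C) (assoc_pi B' C')"
  shows "unitarily_similar C C'"
proof -
  obtain m V where A: "assoc_pi B C \<in> carrier_mat m m" and A': "assoc_pi B' C' \<in> carrier_mat m m"
    and V: "unitary_mat m V" and A'_eq: "assoc_pi B' C' = mat_adjoint V * assoc_pi B C * V"
    using sim unfolding unitarily_similar_def by blast
  have "m = d + n" "m = d' + n"
    using A A' assoc_pi_carrier[OF B C] assoc_pi_carrier[OF B' C'] by auto
  then have B'd: "B' \<in> carrier_mat d n" and V: "unitary_mat (d + n) V" using B' V by auto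
  have Vc: "V \<in> carrier_mat (d + n) (d + n)" using V unfolding unitary_mat_def by simp
  note Ac = assoc_pi_carrier[OF B C]
  have "V * assoc_pi B' C' = V * mat_adjoint V * (assoc_pi B C * V)"
    unfolding A'_eq using Vc Ac by (simp add: mat_carrier_simps carrier_matD[OF Vc] carrier_matD[OF Ac])
  then have AV: "assoc_pi B C * V = V * assoc_pi B' C'"
    using unitary_mat_mult_adjoint[OF V] left_mult_one_mat[OF mult_carrier_mat[OF Ac Vc]] by simp
  obtain V1 V4 where V1: "V1 \<in> carrier_mat d d" and V4: "unitary_mat n V4"
    and V_eq: "V = four_block_mat V1 (0\<^sub>m d n) (0\<^sub>m n d) V4"
    using assoc_pi_intertwiner_block_diag[OF B C B'd C' BB V AV] .
  have V4c: "V4 \<in> carrier_mat n n" using V4 unfolding unitary_mat_def by simp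
  have "four_block_mat (0\<^sub>m d d) B' (0\<^sub>m n d) C'
    = four_block_mat (0\<^sub>m d d) (mat_adjoint V1 * B * V4) (0\<^sub>m n d) (mat_adjoint V4 * C * V4)"
    using A'_eq assoc_pi_block_diag_congruence[OF V1 V4c B C] V1 V4c B C
    by (simp add: V_eq assoc_pi_eq[OF B'd C'] assoc_pi_eq[OF mult_carrier_mat[OF mult_carrier_mat[OF
          mat_adjoint_carrier[OF V1] B] V4c] mult_carrier_mat[OF mult_carrier_mat[OF mat_adjoint_carrier[OF V4c] C] V4c]])
  then have "C' = mat_adjoint V4 * C * V4"
    using V1 V4c B B'd C C' by (subst (asm) four_block_mat_inject) (auto intro!: mult_carrier_mat)
  then show ?thesis using C C' V4 unfolding unitarily_similar_def by blast
qed

theorem mainTheorem1: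
  fixes n :: nat and C C' B B' :: "complex mat"
  assumes "contraction n C" and "contraction n C'"
    and "is_B_mat n C B" and "is_B_mat n C' B'"
  shows "unitarily_similar (assoc_pi B C) (assoc_pi B' C') \<longleftrightarrow> unitarily_similar C C'"
proof -
  \<comment> \<open>Only the dimensions are taken from the contraction hypotheses; the norm bound is what
    guarantees the positive semidefinite square root required by \<^const>\<open>is_B_mat\<close>.\<close>
  have C: "C \<in> carrier_mat n n" and C': "C' \<in> carrier_mat n n"
    using assms(1,2) unfolding contraction_def by auto
  obtain d R where B: "B \<in> carrier_mat d n" "R \<in> carrier_mat n d"
    and BB: "mat_adjoint B * B = defect n C" and BR: "B * R = 1\<^sub>m d"
    using is_B_matE[OF C assms(3)] .
  obtain d' R' where B': "B' \<in> carrier_mat d' n" "R' \<in> carrier_mat n d'"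
    and BB': "mat_adjoint B' * B' = defect n C'" and BR': "B' * R' = 1\<^sub>m d'"
    using is_B_matE[OF C' assms(4)] .
  show ?thesis
    using unitarily_similar_assoc_piD[OF B(1) B'(1) C C' BB]
      unitarily_similar_assoc_piI[OF B BR B' BR' C C' BB BB'] by blast
qed

end
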